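(* For every integer $n\ge 0$, there is exactly one Dumont permutation of the first kind of length $2n$ avoiding the pattern $321$, i.e. $|\mathfrak D^1_{2n}(321)|=1$ (for $n=0$ the set consists of the empty permutation).
   Context: A Dumont permutation of the first kind of length $2n$ is a permutation $\pi\in\mathfrak S_{2n}$ such that for every $i=1,\dots,2n$: if $\pi(i)$ is even then $i<2n$ and $\pi(i)>\pi(i+1)$; if $\pi(i)$ is odd then $i=2n$ or $\pi(i)<\pi(i+1)$. $\mathfrak D^1_{2n}$ denotes the set of these. A permutation $\sigma$ contains a pattern $\tau\in\mathfrak S_k$ if some subsequence $(\sigma(i_1),\dots,\sigma(i_k))$, $i_1<\dots<i_k$, is order-isomorphic to $\tau$; otherwise $\sigma$ avoids $\tau$. $\mathfrak D^1_{2n}(T)$ denotes the set of permutations in $\mathfrak D^1_{2n}$ avoiding every pattern in $T$. *)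

theory Defs
  imports Main "HOL-Combinatorics.Permutations"
begin

definition dumont1 :: "nat \<Rightarrow> (nat \<Rightarrow> nat) \<Rightarrow> bool" where
  "dumont1 n p \<longleftrightarrow> p permutes {1..2*n} \<and>
     (\<forall>i\<in>{1..2*n}.
        (even (p i) \<longrightarrow> i < 2*n \<and> p i > p (i+1)) \<and>
        (odd (p i) \<longrightarrow> i = 2*n \<or> p i < p (i+1)))"

definition contains_pattern :: "nat \<Rightarrow> (nat \<Rightarrow> nat) \<Rightarrow> nat \<Rightarrow> (nat \<Rightarrow> nat) \<Rightarrow> bool" where
  "contains_pattern m sigma k tau \<longleftrightarrow>
     (\<exists>idx :: nat \<Rightarrow> nat. strict_mono_on {1..k} idx \<and> idx ` {1..k} \<subseteq> {1..m} \<and>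
        (\<forall>a\<in>{1..k}. \<forall>b\<in>{1..k}. sigma (idx a) < sigma (idx b) \<longleftrightarrow> tau a < tau b))"

definition avoids :: "nat \<Rightarrow> (nat \<Rightarrow> nat) \<Rightarrow> nat \<Rightarrow> (nat \<Rightarrow> nat) \<Rightarrow> bool" where
  "avoids m sigma k tau \<longleftrightarrow> \<not> contains_pattern m sigma k tau"

definition pat321 :: "nat \<Rightarrow> nat" where
  "pat321 i = (if i \<in> {1..3} then 4 - i else i)"

definition dumont1_avoiding :: "nat \<Rightarrow> nat \<Rightarrow> (nat \<Rightarrow> nat) \<Rightarrow> (nat \<Rightarrow> nat) set" where
  "dumont1_avoiding n k tau = {p. dumont1 n p \<and> avoids (2*n) p k tau}"

end

theory Submission
  imports Defs
begin

text \<open>The unique such permutation is 2 1 4 3 \<dots> (2n) (2n-1). By induction on k it is forced on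
  the positions 1, \<dots>, 2k: the prefix already uses exactly the values 1, \<dots>, 2k, so the value
  2k+2 sits at some position j > 2k. Being even, it is followed by a smaller value, which can only
  be 2k+1. If j > 2k+1, the value at position 2k+1 exceeds 2k+2, and together with positions j
  and j+1 it forms a 321 pattern.\<close>

lemma contains_321_iff:
  "contains_pattern m p 3 pat321 \<longleftrightarrow>
     (\<exists>a b c. 1 \<le> a \<and> a < b \<and> b < c \<and> c \<le> m \<and> p a > p b \<and> p b > p c)"
proof
  assume "contains_pattern m p 3 pat321"
  then obtain idx where mono: "strict_mono_on {1..3} idx" and range: "idx ` {1..3} \<subseteq> {1..m}"
    and order: "\<forall>a\<in>{1..3}. \<forall>b\<in>{1..3}. p (idx a) < p (idx b) \<longleftrightarrow> pat321 a < pat321 b"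
    unfolding contains_pattern_def by blast
  have "idx 1 < idx 2" "idx 2 < idx 3"
    using mono unfolding strict_mono_on_def by auto
  moreover have "1 \<le> idx 1" "idx 3 \<le> m"
    using range by (auto simp: image_subset_iff)
  moreover have "p (idx 1) > p (idx 2)" "p (idx 2) > p (idx 3)"
    using order unfolding pat321_def by auto
  ultimately show "\<exists>a b c. 1 \<le> a \<and> a < b \<and> b < c \<and> c \<le> m \<and> p a > p b \<and> p b > p c"
    by blast
next
  assume "\<exists>a b c. 1 \<le> a \<and> a < b \<and> b < c \<and> c \<le> m \<and> p a > p b \<and> p b > p c"
  then obtain a b c where abc: "1 \<le> a" "a < b" "b < c" "c \<le> m" "p a > p b" "p b > p c"
    by blast
  define idx where "idx x = (if x = 1 then a else if x = 2 then b else c)" for x :: nat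
  have three: "x \<in> {1..3} \<longleftrightarrow> x = 1 \<or> x = 2 \<or> x = 3" for x :: nat
    by auto
  have "strict_mono_on {1..3} idx"
    unfolding strict_mono_on_def three idx_def using abc by auto
  moreover have "idx ` {1..3} \<subseteq> {1..m}"
    unfolding idx_def using abc by auto
  moreover have "\<forall>x\<in>{1..3}. \<forall>y\<in>{1..3}. p (idx x) < p (idx y) \<longleftrightarrow> pat321 x < pat321 y"
    unfolding three idx_def pat321_def using abc by auto
  ultimately show "contains_pattern m p 3 pat321"
    unfolding contains_pattern_def by blast
qed

lemma odd_Suc_le_double_iff: "odd i \<Longrightarrow> Suc i \<le> 2*k \<longleftrightarrow> i \<le> 2*k" for i k :: nat
  by presburger

definition swap_pairs :: "nat \<Rightarrow> nat \<Rightarrow> nat" where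
  "swap_pairs n i = (if i \<in> {1..2*n} then if odd i then i + 1 else i - 1 else i)"

lemma swap_pairs_swap_pairs [simp]: "swap_pairs n (swap_pairs n i) = i"
  unfolding swap_pairs_def by (auto simp: odd_Suc_le_double_iff)

lemma swap_pairs_in_prefix: "k \<le> n \<Longrightarrow> i \<in> {1..2*k} \<Longrightarrow> swap_pairs n i \<in> {1..2*k}"
  unfolding swap_pairs_def by (auto simp: odd_Suc_le_double_iff)

lemma swap_pairs_permutes: "swap_pairs n permutes {1..2*n}"
  unfolding permutes_def
proof (intro conjI allI impI)
  show "swap_pairs n x = x" if "x \<notin> {1..2*n}" for x
    using that by (auto simp: swap_pairs_def)
  show "\<exists>!x. swap_pairs n x = y" for y
    by (metis swap_pairs_swap_pairs)
qed

lemma dumont1_swap_pairs: "dumont1 n (swap_pairs n)"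
  unfolding dumont1_def using swap_pairs_permutes[of n]
  by (auto simp: swap_pairs_def odd_Suc_le_double_iff) presburger

lemma swap_pairs_avoids_321: "avoids (2*n) (swap_pairs n) 3 pat321"
  unfolding avoids_def contains_321_iff swap_pairs_def by (auto elim!: oddE)

lemma dumont1_avoiding_321_step:
  assumes dumont: "dumont1 n p" and avoid: "avoids (2*n) p 3 pat321" and "k < n"
    and prefix: "\<forall>i\<in>{1..2*k}. p i = swap_pairs n i"
  shows "p (2*k+1) = 2*k+2 \<and> p (2*k+2) = 2*k+1"
proof -
  have perm: "p permutes {1..2*n}"
    using dumont unfolding dumont1_def by blast
  have descent: "i < 2*n \<and> p i > p (i+1)" if "i \<in> {1..2*n}" "even (p i)" for i
    using dumont that unfolding dumont1_def by blast
  have inj: "p x = p y \<Longrightarrow> x = y" for x y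
    using permutes_inj[OF perm] by (rule injD)
  have prefix_closed: "p i \<in> {1..2*k} \<longleftrightarrow> i \<in> {1..2*k}" for i
  proof
    assume "p i \<in> {1..2*k}"
    then have "swap_pairs n (p i) \<in> {1..2*k}"
      using \<open>k < n\<close> by (intro swap_pairs_in_prefix) auto
    moreover from this have "p (swap_pairs n (p i)) = p i"
      using prefix by simp
    ultimately show "i \<in> {1..2*k}"
      using inj by metis
  next
    assume "i \<in> {1..2*k}"
    then show "p i \<in> {1..2*k}"
      using prefix swap_pairs_in_prefix[of k n i] \<open>k < n\<close> by simp
  qed
  obtain j where j: "p j = 2*k+2"
    using permutes_surj[OF perm] by (metis surjD)
  have j_range: "j \<in> {1..2*n}"
    using permutes_in_image[OF perm, of j] j \<open>k < n\<close> by simp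
  have "j > 2*k"
    using prefix_closed[of j] j j_range by auto
  have "j < 2*n" and "p (j+1) < 2*k+2"
    using descent[OF j_range] j by auto
  moreover have "p (j+1) \<notin> {1..2*k}" "p (j+1) \<in> {1..2*n}"
    using prefix_closed[of "j+1"] permutes_in_image[OF perm, of "j+1"] \<open>j > 2*k\<close> \<open>j < 2*n\<close>
    by auto
  ultimately have j_next: "p (j+1) = 2*k+1"
    by auto
  have "j = 2*k+1"
  proof (rule ccontr)
    assume "j \<noteq> 2*k+1"
    with \<open>j > 2*k\<close> have "2*k+1 < j" by simp
    have "p (2*k+1) \<notin> {1..2*k}" "p (2*k+1) \<in> {1..2*n}"
      using prefix_closed[of "2*k+1"] permutes_in_image[OF perm, of "2*k+1"] \<open>2*k+1 < j\<close> \<open>j < 2*n\<close>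
      by auto
    moreover have "p (2*k+1) \<noteq> p j" "p (2*k+1) \<noteq> p (j+1)"
      using inj[of "2*k+1" j] inj[of "2*k+1" "j+1"] \<open>2*k+1 < j\<close> by auto
    ultimately have "p (2*k+1) > p j"
      using j j_next by auto
    then have "contains_pattern (2*n) p 3 pat321"
      unfolding contains_321_iff using \<open>2*k+1 < j\<close> \<open>j < 2*n\<close> j j_next
      by (intro exI[of _ "2*k+1"] exI[of _ j] exI[of _ "j+1"]) auto
    then show False
      using avoid unfolding avoids_def by simp
  qed
  then show ?thesis
    using j j_next by simp
qed

lemma dumont1_avoiding_321_prefix:
  assumes "dumont1 n p" "avoids (2*n) p 3 pat321"
  shows "k \<le> n \<Longrightarrow> \<forall>i\<in>{1..2*k}. p i = swap_pairs n i"
proof (induction k)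
  case 0
  then show ?case by simp
next
  case (Suc k)
  then have "p (2*k+1) = 2*k+2 \<and> p (2*k+2) = 2*k+1"
    using dumont1_avoiding_321_step[OF assms] by simp
  moreover have "swap_pairs n (2*k+1) = 2*k+2" "swap_pairs n (2*k+2) = 2*k+1"
    using Suc.prems by (auto simp: swap_pairs_def)
  moreover have "i \<in> {1..2*k} \<or> i = 2*k+1 \<or> i = 2*k+2" if "i \<in> {1..2 * Suc k}" for i
    using that by auto
  ultimately show ?case
    using Suc by (metis Suc_leD)
qed

lemma dumont1_avoiding_321_eq: "dumont1_avoiding n 3 pat321 = {swap_pairs n}"
proof (intro equalityI subsetI)
  fix p
  assume "p \<in> dumont1_avoiding n 3 pat321"
  then have dumont: "dumont1 n p" and avoid: "avoids (2*n) p 3 pat321"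
    unfolding dumont1_avoiding_def by auto
  have "p permutes {1..2*n}"
    using dumont unfolding dumont1_def by blast
  then have "p i = swap_pairs n i" for i
    using dumont1_avoiding_321_prefix[OF dumont avoid, of n]
    by (cases "i \<in> {1..2*n}") (auto simp: permutes_not_in swap_pairs_def)
  then show "p \<in> {swap_pairs n}"
    by auto
qed (auto simp: dumont1_avoiding_def dumont1_swap_pairs swap_pairs_avoids_321)

theorem theorem2p3:
  fixes n :: nat
  shows "card (dumont1_avoiding n 3 pat321) = 1"
  by (simp add: dumont1_avoiding_321_eq)

end
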